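(* For every $\epsilon\in(0,1)$ there is $\bar R(\epsilon)>0$ such that the following holds. Let $p,q\in\mathbb{H}^n\setminus\{0\}$, $t,\tilde t\ge1$, $R>\bar R(\epsilon)$ with $R>1$, and $r\ge\tilde r\ge t\tilde tR$ with $\tilde r\ge\epsilon r$. If $0\in\partial_tB_r(p)\cap\partial_{\tilde t}B_{\tilde r}(q)$ and $q\in\partial_tB_r(p)$, then $d(\hat p,\hat q)\ge\frac12\big(1-\sqrt{1-\epsilon^2/4}\big)$.
   Context: $\mathbb{H}^n=\mathbb{C}^n\times\mathbb{R}$ with product $(z,\tau)(w,\sigma)=(z+w,\tau+\sigma+\tfrac12\operatorname{Im}\langle z,w\rangle)$, $\langle z,w\rangle=\sum_j\overline{z_j}w_j$, identity $0$. Dilations $\delta_\lambda(z,\tau)=(\lambda z,\lambda^2\tau)$. $d(p,q)=\inf\{r>0:\delta_{1/r}(pq^{-1})\in B_{eucl}\}$ ($B_{eucl}$ the closed Euclidean unit ball in $\mathbb{R}^{2n+1}$); explicitly $d((z,\tau),(w,\sigma))=\frac1{\sqrt2}\big(\|z-w\|^2+\sqrt{\|z-w\|^4+4(\tau-\sigma-\frac12\operatorname{Im}\langle z,w\rangle)^2}\big)^{1/2}$. $B_r(p)=\{y:d(y,p)\le r\}$, $\partial B_r(p)=\{y:d(y,p)=r\}$, $\partial_tB_r(p)=\{y\in\mathbb{H}^n:d(y,\partial B_r(p))\le t\}$. For $p\ne0$, $\hat p=\delta_{1/d(p,0)}p$ is its projection to the unit sphere. *)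

theory Defs
  imports "HOL-Analysis.Analysis"
begin

text \<open>Heisenberg group H^n = C^n x R, with C^n modelled as complex^'n ('n a finite index type, n = CARD('n)).\<close>

type_synonym 'n heis = "(complex^'n) \<times> real"

definition herm :: "complex^'n \<Rightarrow> complex^'n \<Rightarrow> complex" where
  "herm z w = (\<Sum>j\<in>UNIV. cnj (z $ j) * w $ j)"

definition hmult :: "'n::finite heis \<Rightarrow> 'n heis \<Rightarrow> 'n heis" where
  "hmult p q = (fst p + fst q, snd p + snd q + (1/2) * Im (herm (fst p) (fst q)))"

definition hinv :: "'n::finite heis \<Rightarrow> 'n heis" where
  "hinv p = (- fst p, - snd p)"

definition hdil :: "real \<Rightarrow> 'n::finite heis \<Rightarrow> 'n heis" where
  "hdil lam p = (complex_of_real lam *s fst p, lam^2 * snd p)"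

definition in_eucl_ball :: "'n::finite heis \<Rightarrow> bool" where
  "in_eucl_ball p \<longleftrightarrow> norm (fst p)^2 + (snd p)^2 \<le> 1"

definition hdist :: "'n::finite heis \<Rightarrow> 'n heis \<Rightarrow> real" where
  "hdist p q = Inf {r. r > 0 \<and> in_eucl_ball (hdil (1/r) (hmult p (hinv q)))}"

definition hsphere :: "'n::finite heis \<Rightarrow> real \<Rightarrow> 'n heis set" where
  "hsphere p r = {y. hdist y p = r}"

definition hsetdist :: "'n::finite heis \<Rightarrow> 'n heis set \<Rightarrow> real" where
  "hsetdist y S = Inf (hdist y ` S)"

text \<open>t-neighbourhood of the sphere \<partial>B_r(p).\<close>
definition hshell :: "'n::finite heis \<Rightarrow> real \<Rightarrow> real \<Rightarrow> 'n heis set" where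
  "hshell p r t = {y. hsetdist y (hsphere p r) \<le> t}"

definition hproj :: "'n::finite heis \<Rightarrow> 'n heis" where
  "hproj p = hdil (1 / hdist p 0) p"

end

theory Submission
  imports Defs
begin

text \<open>
  Let \<open>N x = d(x, 0)\<close>; explicitly \<open>N(z,\<tau>)^2 = (|z|^2 + sqrt(|z|^4 + 4\<tau>^2)) / 2\<close>, so \<open>N\<close> is
  homogeneous under dilations and satisfies \<open>N(xy) \<le> N x + 2 N y\<close>. Every point of
  \<open>\<partial>\<^sub>tB\<^sub>r(p)\<close> is at distance \<open>r \<plusminus> 2t\<close> from \<open>p\<close>, so \<open>a = N p \<approx> r\<close>, \<open>b = N q \<approx> r'\<close> and
  \<open>d(q,p) \<ge> r - 2t\<close>, all with errors at most \<open>2r/R\<close>. Going from \<open>q = \<delta>\<^sub>b q'\<close> to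
  \<open>p = \<delta>\<^sub>a p'\<close> (hats dropped) through \<open>\<delta>\<^sub>b p'\<close> gives \<open>d(q,p) \<le> 2b d(q',p') + sqrt|a^2 - b^2|\<close>,
  and \<open>b \<ge> \<epsilon>r\<close> makes \<open>|a^2 - b^2| \<le> r^2 (1 - \<epsilon>^2)\<close> up to the errors. For \<open>R > 50/\<epsilon>^2\<close>
  the errors are absorbed by the gap between \<open>sqrt(1 - \<epsilon>^2)\<close> and \<open>sqrt(1 - \<epsilon>^2/4)\<close>, leaving
  \<open>1 \<le> 2 d(q',p') + sqrt(1 - \<epsilon>^2/4)\<close>.
\<close>

section \<open>Group structure\<close>

lemma herm_add_left: "herm (a + b) c = herm a c + herm b c"
  unfolding herm_def by (simp add: sum.distrib distrib_right)

lemma herm_add_right: "herm c (a + b) = herm c a + herm c b"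
  unfolding herm_def by (simp add: sum.distrib distrib_left)

lemma herm_minus_left: "herm (- a) c = - herm a c"
  unfolding herm_def by (simp add: sum_negf)

lemma herm_minus_right: "herm c (- a) = - herm c a"
  unfolding herm_def by (simp add: sum_negf)

lemma herm_scaleR_left: "herm (k *\<^sub>R a) c = of_real k * herm a c"
  unfolding herm_def by (simp add: sum_distrib_left scaleR_conv_of_real[where 'a=complex] mult.assoc)

lemma herm_scaleR_right: "herm c (k *\<^sub>R a) = of_real k * herm c a"
  unfolding herm_def by (simp add: sum_distrib_left scaleR_conv_of_real[where 'a=complex] mult.left_commute)

lemma herm_zero_left [simp]: "herm 0 z = 0"
  unfolding herm_def by simp

lemma herm_zero_right [simp]: "herm z 0 = 0"
  unfolding herm_def by simp

lemma Im_herm_commute: "Im (herm w z) = - Im (herm z w)"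
proof -
  have "herm w z = cnj (herm z w)"
    unfolding herm_def by (simp add: mult.commute)
  then show ?thesis by simp
qed

lemma Im_herm_self [simp]: "Im (herm z z) = 0"
  unfolding herm_def by (simp add: algebra_simps)

lemma abs_Im_herm_le: "\<bar>Im (herm z w)\<bar> \<le> norm z * norm w"
proof -
  have "\<bar>Im (herm z w)\<bar> \<le> cmod (herm z w)" by (rule abs_Im_le_cmod)
  also have "\<dots> \<le> (\<Sum>j\<in>UNIV. cmod (cnj (z $ j) * w $ j))"
    unfolding herm_def by (rule norm_sum)
  also have "\<dots> = (\<Sum>j\<in>UNIV. \<bar>cmod (z $ j)\<bar> * \<bar>cmod (w $ j)\<bar>)" by (simp add: norm_mult)
  also have "\<dots> \<le> L2_set (\<lambda>j. cmod (z $ j)) UNIV * L2_set (\<lambda>j. cmod (w $ j)) UNIV"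
    by (rule L2_set_mult_ineq)
  also have "\<dots> = norm z * norm w" by (simp add: norm_vec_def)
  finally show ?thesis .
qed

lemma hmult_assoc: "hmult (hmult x y) v = hmult x (hmult y v)"
  unfolding hmult_def by (simp add: herm_add_left herm_add_right algebra_simps)

lemma hmult_zero_left [simp]: "hmult 0 x = x"
  unfolding hmult_def by simp

lemma hmult_zero_right [simp]: "hmult x 0 = x"
  unfolding hmult_def by simp

lemma hmult_hinv_right [simp]: "hmult x (hinv x) = 0"
  unfolding hmult_def hinv_def by (simp add: herm_minus_right prod_eq_iff)

lemma hmult_hinv_left [simp]: "hmult (hinv x) x = 0"
  unfolding hmult_def hinv_def by (simp add: herm_minus_left prod_eq_iff)

lemma hinv_hinv [simp]: "hinv (hinv x) = x"
  unfolding hinv_def by simp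

lemma hinv_hmult: "hinv (hmult x y) = hmult (hinv y) (hinv x)"
  unfolding hinv_def hmult_def
  by (simp add: herm_minus_left herm_minus_right Im_herm_commute[of "fst y"] algebra_simps)

lemma hmult_cancel_middle: "hmult (hmult x (hinv y)) (hmult y z) = hmult x z"
  by (simp flip: hmult_assoc) (simp add: hmult_assoc)

lemma hdil_conv_scaleR: "hdil c p = (c *\<^sub>R fst p, c^2 * snd p)"
  unfolding hdil_def by (simp add: vec_eq_iff scaleR_conv_of_real[where 'a=complex])

lemma hdil_hmult: "hdil c (hmult x y) = hmult (hdil c x) (hdil c y)"
  unfolding hdil_conv_scaleR hmult_def
  by (simp add: herm_scaleR_left herm_scaleR_right algebra_simps power2_eq_square)

lemma hdil_hinv: "hdil c (hinv x) = hinv (hdil c x)"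
  unfolding hdil_conv_scaleR hinv_def by simp

lemma hdil_hdil: "hdil c (hdil c' x) = hdil (c * c') x"
  unfolding hdil_conv_scaleR by (simp add: power_mult_distrib)

lemma hdil_one [simp]: "hdil 1 x = x"
  unfolding hdil_conv_scaleR by simp

section \<open>The gauge\<close>

definition heis_gauge :: "'n::finite heis \<Rightarrow> real" where
  "heis_gauge x = sqrt ((norm (fst x)^2 + sqrt ((norm (fst x)^2)^2 + 4 * (snd x)^2)) / 2)"

lemma heis_gauge_le_iff:
  assumes "L > 0"
  shows "heis_gauge x \<le> L \<longleftrightarrow> norm (fst x)^2 * L^2 + (snd x)^2 \<le> L^4"
proof -
  define u where "u = norm (fst x)^2"
  define w where "w = snd x"
  have L4: "L^4 = L^2 * L^2" by (simp add: power4_eq_xxxx power2_eq_square)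
  have "heis_gauge x \<le> L \<longleftrightarrow> (u + sqrt (u^2 + 4 * w^2)) / 2 \<le> L^2"
    unfolding heis_gauge_def u_def w_def using assms
    by (meson less_imp_le real_le_lsqrt sqrt_le_D)
  also have "\<dots> \<longleftrightarrow> sqrt (u^2 + 4 * w^2) \<le> 2 * L^2 - u" by auto
  also have "\<dots> \<longleftrightarrow> u * L^2 + w^2 \<le> L^4"
  proof
    assume "sqrt (u^2 + 4 * w^2) \<le> 2 * L^2 - u"
    then have "u^2 + 4 * w^2 \<le> (2 * L^2 - u)^2" by (rule sqrt_le_D)
    then show "u * L^2 + w^2 \<le> L^4" by (simp add: L4 power2_eq_square algebra_simps)
  next
    assume le: "u * L^2 + w^2 \<le> L^4"
    have "u * L^2 \<le> L^2 * L^2" using le L4 zero_le_power2[of w] by linarith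
    then have "u \<le> L^2" using assms by (metis mult_right_le_imp_le zero_less_power)
    moreover have "u^2 + 4 * w^2 \<le> (2 * L^2 - u)^2"
      using le by (simp add: L4 power2_eq_square algebra_simps)
    moreover have "u \<le> 2 * L^2" using calculation(1) zero_le_power2[of L] by linarith
    ultimately show "sqrt (u^2 + 4 * w^2) \<le> 2 * L^2 - u" by (auto intro!: real_le_lsqrt)
  qed
  finally show ?thesis unfolding u_def w_def .
qed

lemma heis_gauge_nonneg: "heis_gauge x \<ge> 0"
  unfolding heis_gauge_def by simp

lemma heis_gauge_pos:
  assumes "x \<noteq> 0"
  shows "heis_gauge x > 0"
proof -
  have "norm (fst x)^2 + sqrt ((norm (fst x)^2)^2 + 4 * (snd x)^2) > 0"
  proof (cases "snd x = 0")
    case True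
    then have "fst x \<noteq> 0" using assms by (auto simp: prod_eq_iff)
    then show ?thesis by (simp add: add_pos_nonneg)
  next
    case False
    then have "(norm (fst x)^2)^2 + 4 * (snd x)^2 > 0" by (simp add: add_nonneg_pos)
    then show ?thesis by (simp add: add_nonneg_pos)
  qed
  then show ?thesis unfolding heis_gauge_def by simp
qed

lemma heis_gauge_zero [simp]: "heis_gauge 0 = 0"
  unfolding heis_gauge_def by simp

lemma heis_gauge_hinv [simp]: "heis_gauge (hinv x) = heis_gauge x"
  unfolding heis_gauge_def hinv_def by simp

lemma heis_gauge_hdil:
  assumes "c \<ge> 0"
  shows "heis_gauge (hdil c x) = c * heis_gauge x"
proof -
  define u where "u = norm (fst x)^2"
  define w where "w = snd x"
  have "(c^2 * u)^2 + 4 * (c^2 * w)^2 = (c^2)^2 * (u^2 + 4 * w^2)"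
    by (simp add: power_mult_distrib algebra_simps)
  then have "sqrt ((c^2 * u)^2 + 4 * (c^2 * w)^2) = c^2 * sqrt (u^2 + 4 * w^2)"
    by (simp only: real_sqrt_mult real_sqrt_abs abs_power2)
  then have "heis_gauge (hdil c x) = sqrt (c^2 * ((u + sqrt (u^2 + 4 * w^2)) / 2))"
    unfolding heis_gauge_def hdil_conv_scaleR u_def w_def
    using assms by (simp add: power_mult_distrib algebra_simps)
  also have "\<dots> = c * heis_gauge x"
    unfolding heis_gauge_def u_def w_def real_sqrt_mult using assms by simp
  finally show ?thesis .
qed

lemma heis_gauge_le_one_iff: "heis_gauge x \<le> 1 \<longleftrightarrow> norm (fst x)^2 + (snd x)^2 \<le> 1"
  using heis_gauge_le_iff[of 1 x] by simp

lemma norm_fst_le_heis_gauge: "norm (fst x) \<le> heis_gauge x"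
proof -
  have "norm (fst x)^2 \<le> sqrt ((norm (fst x)^2)^2 + 4 * (snd x)^2)"
    by (rule real_le_rsqrt) simp
  then have "norm (fst x)^2 \<le> (heis_gauge x)^2"
    unfolding heis_gauge_def by (simp add: add_nonneg_nonneg)
  then show ?thesis using heis_gauge_nonneg power2_le_imp_le by blast
qed

lemma hdist_eq_heis_gauge: "hdist p q = heis_gauge (hmult p (hinv q))"
proof -
  define x where "x = hmult p (hinv q)"
  have ball: "in_eucl_ball (hdil (1 / r) x) \<longleftrightarrow> heis_gauge x \<le> r" if "r > 0" for r
  proof -
    have "in_eucl_ball (hdil (1 / r) x) \<longleftrightarrow> norm (fst x)^2 / r^2 + (snd x)^2 / r^4 \<le> 1"
      unfolding in_eucl_ball_def hdil_conv_scaleR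
      by (simp add: power_divide power_mult_distrib flip: power_mult)
    also have "\<dots> \<longleftrightarrow> norm (fst x)^2 * r^2 + (snd x)^2 \<le> r^4"
      using that by (simp add: field_simps power4_eq_xxxx power2_eq_square)
    also have "\<dots> \<longleftrightarrow> heis_gauge x \<le> r"
      by (rule heis_gauge_le_iff[OF that, symmetric])
    finally show ?thesis .
  qed
  then have "{r. r > 0 \<and> in_eucl_ball (hdil (1 / r) x)} = {r. r > 0 \<and> heis_gauge x \<le> r}"
    by blast
  also have "\<dots> = (if heis_gauge x > 0 then {heis_gauge x..} else {0<..})"
    using heis_gauge_nonneg[of x] by (auto simp: less_le_trans)
  finally show ?thesis
    unfolding hdist_def x_def[symmetric] using heis_gauge_nonneg[of x] by auto
qed

lemma hdist_commute: "hdist p q = hdist q p"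
  by (metis hdist_eq_heis_gauge heis_gauge_hinv hinv_hinv hinv_hmult)

lemma hdist_nonneg: "0 \<le> hdist p q"
  by (simp add: hdist_eq_heis_gauge heis_gauge_nonneg)

lemma hdist_zero_left: "hdist 0 p = heis_gauge p"
  by (simp add: hdist_eq_heis_gauge)

lemma hdist_hdil:
  assumes "c \<ge> 0"
  shows "hdist (hdil c x) (hdil c y) = c * hdist x y"
  by (simp add: hdist_eq_heis_gauge assms heis_gauge_hdil flip: hdil_hinv hdil_hmult)

lemma hproj_eq: "hproj p = hdil (1 / heis_gauge p) p"
  unfolding hproj_def hdist_commute[of p] hdist_zero_left ..

lemma cmod_Complex_mono:
  assumes "\<bar>u\<bar> \<le> u'" and "\<bar>v\<bar> \<le> v'"
  shows "cmod (Complex u v) \<le> cmod (Complex u' v')"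
proof -
  have "u^2 \<le> u'^2" "v^2 \<le> v'^2"
    using assms abs_le_square_iff[of u u'] abs_le_square_iff[of v v'] by auto
  then show ?thesis unfolding cmod_def by simp
qed

lemma cmod_Complex_le_of_heis_gauge_le:
  assumes "heis_gauge x \<le> a" and "0 < a" and "a \<le> L"
  shows "cmod (Complex (norm (fst x) * L) (snd x)) \<le> a * L"
proof -
  have le: "norm (fst x)^2 * a^2 + (snd x)^2 \<le> a^4"
    using assms heis_gauge_le_iff by blast
  have ratio: "1 \<le> L^2 / a^2" using assms power_mono[of a L 2] by simp
  have "(norm (fst x) * L)^2 + (snd x)^2 \<le> (norm (fst x) * L)^2 + L^2 / a^2 * (snd x)^2"
    using mult_right_mono[OF ratio, of "(snd x)^2"] by simp
  also have "\<dots> = L^2 / a^2 * (norm (fst x)^2 * a^2 + (snd x)^2)"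
    using assms by (simp add: field_simps power_mult_distrib)
  also have "\<dots> \<le> L^2 / a^2 * a^4" using le by (intro mult_left_mono) auto
  also have "\<dots> = (a * L)^2"
    using assms by (simp add: field_simps power4_eq_xxxx power2_eq_square)
  finally show ?thesis unfolding cmod_def using assms by (simp add: real_le_lsqrt)
qed

lemma cmod_hmult_majorant_le:
  assumes x: "heis_gauge (z, \<tau>) \<le> a" and y: "heis_gauge (w, \<sigma>) \<le> b" and ab: "0 < a" "0 < b"
  defines "L \<equiv> a + 2 * b"
  shows "cmod (Complex ((norm z + norm w) * L) (\<bar>\<tau>\<bar> + \<bar>\<sigma>\<bar> + norm z * norm w / 2)) \<le> L^2"
proof -
  have L: "a \<le> L" "b \<le> L" using assms by auto
  have zw: "norm z * norm w \<le> a * b"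
    using norm_fst_le_heis_gauge[of "(z, \<tau>)"] norm_fst_le_heis_gauge[of "(w, \<sigma>)"] x y ab
    by (intro mult_mono) auto
  have "Complex ((norm z + norm w) * L) (\<bar>\<tau>\<bar> + \<bar>\<sigma>\<bar> + norm z * norm w / 2)
      = Complex (norm z * L) \<bar>\<tau>\<bar> + Complex (norm w * L) \<bar>\<sigma>\<bar> + Complex 0 (norm z * norm w / 2)"
    by (simp add: complex_eq_iff algebra_simps)
  then have "cmod (Complex ((norm z + norm w) * L) (\<bar>\<tau>\<bar> + \<bar>\<sigma>\<bar> + norm z * norm w / 2))
      \<le> cmod (Complex (norm z * L) \<bar>\<tau>\<bar>) + cmod (Complex (norm w * L) \<bar>\<sigma>\<bar>)
          + cmod (Complex 0 (norm z * norm w / 2))"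
    by (simp only: order_trans[OF norm_triangle_ineq add_right_mono[OF norm_triangle_ineq]])
  also have "\<dots> = cmod (Complex (norm z * L) \<tau>) + cmod (Complex (norm w * L) \<sigma>) + norm z * norm w / 2"
    by (simp add: cmod_def)
  also have "\<dots> \<le> a * L + b * L + a * b / 2"
    using cmod_Complex_le_of_heis_gauge_le[OF x] cmod_Complex_le_of_heis_gauge_le[OF y] assms L zw
    by fastforce
  also have "\<dots> \<le> L^2"
    using assms by (simp add: power2_eq_square algebra_simps)
  finally show ?thesis .
qed

lemma heis_gauge_hmult_le: "heis_gauge (hmult x y) \<le> heis_gauge x + 2 * heis_gauge y"
proof (cases "x = 0 \<or> y = 0")
  case True
  then show ?thesis using heis_gauge_nonneg[of x] heis_gauge_nonneg[of y] by auto
next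
  case False
  define L where "L = heis_gauge x + 2 * heis_gauge y"
  have L: "L > 0" using False heis_gauge_pos[of x] heis_gauge_nonneg[of y] L_def by auto
  obtain z \<tau> w \<sigma> where xy: "x = (z, \<tau>)" "y = (w, \<sigma>)" by fastforce
  have "\<bar>norm (z + w) * L\<bar> \<le> (norm z + norm w) * L"
    using L norm_triangle_ineq[of z w] by (simp add: abs_mult)
  moreover have "\<bar>\<tau> + \<sigma> + 1/2 * Im (herm z w)\<bar> \<le> \<bar>\<tau>\<bar> + \<bar>\<sigma>\<bar> + norm z * norm w / 2"
    using abs_Im_herm_le[of z w] by (simp add: abs_triangle_ineq4)
  ultimately have "cmod (Complex (norm (z + w) * L) (\<tau> + \<sigma> + 1/2 * Im (herm z w))) \<le> L^2"
    using cmod_hmult_majorant_le[of z \<tau> "heis_gauge x" w \<sigma> "heis_gauge y"]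
      False heis_gauge_pos[of x] heis_gauge_pos[of y]
    unfolding xy L_def by (blast intro: order_trans cmod_Complex_mono)
  then have "(norm (z + w) * L)^2 + (\<tau> + \<sigma> + 1/2 * Im (herm z w))^2 \<le> (L^2)^2"
    unfolding cmod_def complex.sel by (rule sqrt_le_D)
  moreover have "(L^2)^2 = L^4" by simp
  ultimately have "heis_gauge (hmult x y) \<le> L"
    unfolding heis_gauge_le_iff[OF L] xy hmult_def by (simp add: power_mult_distrib)
  then show ?thesis unfolding L_def .
qed

lemma heis_gauge_hmult_le': "heis_gauge (hmult x y) \<le> 2 * heis_gauge x + heis_gauge y"
  using heis_gauge_hmult_le[of "hinv y" "hinv x"] by (simp flip: hinv_hmult)

lemma hdist_quasi_triangle: "hdist x z \<le> 2 * hdist x y + hdist y z"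
  unfolding hdist_eq_heis_gauge
  using heis_gauge_hmult_le'[of "hmult x (hinv y)" "hmult y (hinv z)"]
  by (simp add: hmult_cancel_middle)

section \<open>Spheres, shells and projections\<close>

lemma heis_gauge_vertical:
  assumes "r \<ge> 0"
  shows "heis_gauge (0, r^2) = r"
proof -
  have "sqrt (4 * r^4) = 2 * r^2"
    by (rule real_sqrt_unique) (simp_all add: power_mult_distrib flip: power_mult)
  then show ?thesis unfolding heis_gauge_def using assms by simp
qed

lemma hmult_vertical_in_hsphere:
  assumes "r \<ge> 0"
  shows "hmult (0, r^2) p \<in> hsphere p r"
  unfolding hsphere_def hdist_eq_heis_gauge by (simp add: hmult_assoc heis_gauge_vertical[OF assms])

lemma hshell_dist_bound:
  assumes "x \<in> hshell p r t" and "r \<ge> 0"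
  shows "\<bar>hdist x p - r\<bar> \<le> 2 * t"
proof (rule field_le_epsilon)
  fix \<epsilon> :: real
  assume "0 < \<epsilon>"
  then have inf: "Inf (hdist x ` hsphere p r) < t + \<epsilon> / 2"
    using assms(1) unfolding hshell_def hsetdist_def by simp
  have "hdist x ` hsphere p r \<noteq> {}"
    using hmult_vertical_in_hsphere[OF assms(2)] by blast
  from cInf_lessD[OF this inf] obtain y where y: "y \<in> hsphere p r" "hdist x y < t + \<epsilon> / 2"
    by blast
  have "hdist x p \<le> 2 * hdist x y + r"
    using hdist_quasi_triangle[where x = x and y = y and z = p] y(1)
    unfolding hsphere_def by simp
  moreover have "r \<le> 2 * hdist x y + hdist x p"
    using hdist_quasi_triangle[where x = y and y = x and z = p] hdist_commute[of y x] y(1)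
    unfolding hsphere_def by simp
  ultimately show "\<bar>hdist x p - r\<bar> \<le> 2 * t + \<epsilon>"
    using y(2) by (simp add: abs_le_iff)
qed

lemma heis_gauge_anisotropic_le:
  assumes "norm z^2 + \<tau>^2 \<le> 1" and "u^2 \<le> \<bar>v\<bar>"
  shows "heis_gauge (u *\<^sub>R z, v * \<tau>) \<le> sqrt \<bar>v\<bar>"
proof (cases "v = 0")
  case True
  then have "u = 0" using assms(2) by simp
  then show ?thesis using True unfolding heis_gauge_def by simp
next
  case False
  define L where "L = sqrt \<bar>v\<bar>"
  have L: "L > 0" "L^2 = \<bar>v\<bar>" using False unfolding L_def by simp_all
  have "L^4 = (L^2)^2" by (simp flip: power_mult)
  with L have "L^4 = v^2" by simp
  have "norm (u *\<^sub>R z)^2 * L^2 + (v * \<tau>)^2 = (u^2 * \<bar>v\<bar>) * norm z^2 + v^2 * \<tau>^2"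
    using L by (simp add: power_mult_distrib)
  also have "\<dots> \<le> v^2 * norm z^2 + v^2 * \<tau>^2"
    using mult_right_mono[OF assms(2), of "\<bar>v\<bar>"]
    by (intro add_right_mono mult_right_mono) (simp_all flip: power2_eq_square)
  also have "\<dots> \<le> L^4"
    using mult_left_mono[OF assms(1), of "v^2"] \<open>L^4 = v^2\<close> by (simp add: algebra_simps)
  finally show ?thesis
    unfolding L_def[symmetric] using heis_gauge_le_iff[OF L(1), of "(u *\<^sub>R z, v * \<tau>)"] by simp
qed

lemma hdist_hdil_hdil_le:
  assumes "heis_gauge P \<le> 1" and "a \<ge> 0" and "b \<ge> 0"
  shows "hdist (hdil b P) (hdil a P) \<le> sqrt \<bar>a^2 - b^2\<bar>"
proof -
  obtain z \<tau> where P: "P = (z, \<tau>)" by fastforce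
  have "hmult (hdil b P) (hinv (hdil a P)) = ((b - a) *\<^sub>R z, (b^2 - a^2) * \<tau>)"
    unfolding P hdil_conv_scaleR hmult_def hinv_def
    by (simp add: herm_scaleR_left herm_scaleR_right herm_minus_right algebra_simps)
  moreover have "(b - a)^2 \<le> \<bar>b^2 - a^2\<bar>"
  proof -
    have "(b - a)^2 = \<bar>b - a\<bar> * \<bar>b - a\<bar>" by (simp add: power2_eq_square)
    also have "\<dots> \<le> \<bar>b - a\<bar> * (b + a)" using assms by (intro mult_left_mono) auto
    also have "\<dots> = \<bar>(b - a) * (b + a)\<bar>" using assms by (simp add: abs_mult)
    also have "\<dots> = \<bar>b^2 - a^2\<bar>" by (simp add: power2_eq_square algebra_simps)
    finally show ?thesis .
  qed
  ultimately show ?thesis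
    using heis_gauge_anisotropic_le[of z \<tau> "b - a" "b^2 - a^2"] assms(1)
    unfolding hdist_eq_heis_gauge heis_gauge_le_one_iff P by (simp add: abs_minus_commute)
qed

lemma hdist_le_hdist_hproj:
  assumes "p \<noteq> 0" and "q \<noteq> 0"
  shows "hdist q p \<le> 2 * heis_gauge q * hdist (hproj q) (hproj p)
    + sqrt \<bar>(heis_gauge p)^2 - (heis_gauge q)^2\<bar>"
proof -
  define a where "a = heis_gauge p"
  define b where "b = heis_gauge q"
  define P where "P = hproj p"
  define Q where "Q = hproj q"
  have a: "a > 0" and b: "b > 0"
    using assms heis_gauge_pos[of p] heis_gauge_pos[of q] a_def b_def by auto
  have p: "p = hdil a P" and q: "q = hdil b Q"
    using a b unfolding P_def Q_def hproj_eq hdil_hdil a_def b_def by simp_all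
  have "heis_gauge P \<le> 1"
    using a unfolding P_def hproj_eq a_def[symmetric] by (simp add: heis_gauge_hdil a_def)
  then have "hdist (hdil b P) p \<le> sqrt \<bar>a^2 - b^2\<bar>"
    unfolding p using a b by (intro hdist_hdil_hdil_le) auto
  moreover have "hdist q (hdil b P) = b * hdist Q P"
    unfolding q using b by (intro hdist_hdil) auto
  ultimately show ?thesis
    using hdist_quasi_triangle[where x = q and y = "hdil b P" and z = p]
    unfolding a_def[symmetric] b_def[symmetric] P_def[symmetric] Q_def[symmetric] by simp
qed

section \<open>The separation estimate\<close>

lemma separation_constant_le:
  fixes e d :: real
  assumes "0 < e" "e < 1" "0 < d" "25 * d < e^2"
  shows "(1 + d)^2 - e^2 * (1 - d)^2 + 4 * d \<le> (sqrt (1 - e^2 / 4) - 2 * d)^2"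
proof -
  define s where "s = sqrt (1 - e^2 / 4)"
  have e2: "e^2 < 1" using assms by (simp add: power_less_one_iff)
  have s: "s^2 = 1 - e^2 / 4" "s \<le> 1" unfolding s_def using e2 by simp_all
  have "d \<le> 1" using assms e2 by linarith
  then have "d^2 \<le> d" "e^2 * d \<le> d"
    using assms e2 by (simp_all add: power2_eq_square mult_left_le_one_le)
  moreover have "(1 + d)^2 - e^2 * (1 - d)^2 + 4 * d = 1 - e^2 + 6 * d + d^2 + 2 * (e^2 * d) - e^2 * d^2"
    by (simp add: power2_eq_square algebra_simps)
  moreover have "0 \<le> e^2 * d^2" by simp
  ultimately have "(1 + d)^2 - e^2 * (1 - d)^2 + 4 * d \<le> 1 - e^2 + 9 * d" by linarith
  also have "\<dots> \<le> s^2 - 4 * d" using s assms by simp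
  also have "\<dots> \<le> (s - 2 * d)^2"
  proof -
    have "d * s \<le> d" using s(2) assms by (simp add: mult_left_le)
    moreover have "(s - 2 * d)^2 = s^2 - 4 * (d * s) + 4 * d^2"
      by (simp add: power2_eq_square algebra_simps)
    ultimately show ?thesis using zero_le_power2[of d] by linarith
  qed
  finally show ?thesis unfolding s_def .
qed

lemma abs_diff_squares_le:
  fixes a b c d r :: real
  assumes "r * (1 - d) \<le> a" "a \<le> r * (1 + d)" "c * r * (1 - d) \<le> b" "b \<le> r * (1 + d)"
    and "0 \<le> c" "c \<le> 1" "0 \<le> d" "d \<le> 1" "0 \<le> r"
  shows "\<bar>a^2 - b^2\<bar> \<le> r^2 * ((1 + d)^2 - c^2 * (1 - d)^2 + 4 * d)"
proof -
  have "0 \<le> r * (1 - d)" "0 \<le> c * r * (1 - d)" using assms by simp_all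
  with assms have nonneg: "0 \<le> a" "0 \<le> b" by linarith+
  show ?thesis
  proof (cases "b \<le> a")
    case True
    have "(c * r * (1 - d))^2 \<le> b^2" "a^2 \<le> (r * (1 + d))^2" "b^2 \<le> a^2"
      using assms nonneg True by (auto intro!: power_mono)
    then have "\<bar>a^2 - b^2\<bar> \<le> (r * (1 + d))^2 - (c * r * (1 - d))^2" by simp
    also have "\<dots> \<le> r^2 * ((1 + d)^2 - c^2 * (1 - d)^2 + 4 * d)"
      using assms by (simp add: power2_eq_square algebra_simps)
    finally show ?thesis .
  next
    case False
    have "(r * (1 - d))^2 \<le> a^2" "b^2 \<le> (r * (1 + d))^2" "a^2 \<le> b^2"
      using assms nonneg False by (auto intro!: power_mono)
    then have "\<bar>a^2 - b^2\<bar> \<le> r^2 * (4 * d)" by (simp add: power2_eq_square algebra_simps)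
    moreover have "c^2 * (1 - d)^2 \<le> (1 + d)^2"
      using assms power_mono[of "1 - d" "1 + d" 2] power_mono[of c 1 2]
        mult_mono[of "c^2" 1 "(1 - d)^2" "(1 + d)^2"] by simp
    ultimately show ?thesis by (smt (verit) mult_left_mono zero_le_power2)
  qed
qed

lemma hproj_dist_lower_bound:
  fixes e d r r' a b \<eta> :: real
  assumes e: "0 < e" "e < 1" and d: "0 < d" "25 * d < e^2"
    and r: "0 < r'" "r' \<le> r" "e * r \<le> r'"
    and a: "\<bar>a - r\<bar> \<le> d * r" and b: "\<bar>b - r'\<bar> \<le> d * r'" and "0 \<le> \<eta>"
    and main: "r - d * r \<le> 2 * b * \<eta> + sqrt \<bar>a^2 - b^2\<bar>"
  shows "(1/2) * (1 - sqrt (1 - e^2 / 4)) \<le> \<eta>"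
proof -
  define s where "s = sqrt (1 - e^2 / 4)"
  have e2: "e^2 < 1" using e by (simp add: power_less_one_iff)
  have "d \<le> 1" using d e2 by linarith
  have "(3/4)^2 \<le> 1 - e^2 / 4" using e2 by (simp add: power_divide)
  then have "3/4 \<le> s" unfolding s_def by (rule real_le_rsqrt)
  have "r' * (1 + d) \<le> r * (1 + d)" "e * r * (1 - d) \<le> r' * (1 - d)"
    using r d \<open>d \<le> 1\<close> by (simp_all add: mult_right_mono)
  then have bounds: "r * (1 - d) \<le> a" "a \<le> r * (1 + d)" "e * r * (1 - d) \<le> b" "b \<le> r * (1 + d)"
    using a b by (auto simp: abs_le_iff algebra_simps)
  then have "\<bar>a^2 - b^2\<bar> \<le> r^2 * ((1 + d)^2 - e^2 * (1 - d)^2 + 4 * d)"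
    using r e d \<open>d \<le> 1\<close> by (intro abs_diff_squares_le) auto
  also have "\<dots> \<le> (r * (s - 2 * d))^2"
    using separation_constant_le[OF e d] unfolding s_def[symmetric]
    by (simp add: power_mult_distrib mult_left_mono)
  moreover have "0 \<le> r * (s - 2 * d)"
    using r d e2 \<open>3/4 \<le> s\<close> by (intro mult_nonneg_nonneg) auto
  ultimately have "sqrt \<bar>a^2 - b^2\<bar> \<le> r * (s - 2 * d)"
    by (intro real_le_lsqrt) auto
  moreover have "2 * b * \<eta> \<le> 2 * (r * (1 + d)) * \<eta>"
    using bounds(4) \<open>0 \<le> \<eta>\<close> by (intro mult_right_mono) auto
  ultimately have "r * (1 + d - s) \<le> r * ((1 + d) * (2 * \<eta>))"
    using main by (simp add: algebra_simps)
  then have "1 + d - s \<le> (1 + d) * (2 * \<eta>)" using r by (simp add: mult_le_cancel_left_pos)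
  moreover have "(1 + d) * (1 - s) \<le> 1 + d - s" using d \<open>3/4 \<le> s\<close> by (simp add: algebra_simps)
  ultimately have "(1 + d) * (1 - s) \<le> (1 + d) * (2 * \<eta>)" by linarith
  then show ?thesis unfolding s_def using d by simp
qed

lemma hproj_separation:
  fixes p q :: "'n::finite heis"
  assumes e: "0 < e" "e < 1" and p: "p \<noteq> 0" and q: "q \<noteq> 0"
    and "t \<ge> 1" "t' \<ge> 1" "R > 50 / e^2" "R > 1"
    and r: "r \<ge> r'" "r' \<ge> t * t' * R" "r' \<ge> e * r"
    and shell: "0 \<in> hshell p r t" "0 \<in> hshell q r' t'" "q \<in> hshell p r t"
  shows "(1/2) * (1 - sqrt (1 - e^2 / 4)) \<le> hdist (hproj p) (hproj q)"
proof -
  define d where "d = 2 / R"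
  have "t * R \<le> t * t' * R" "t' * R \<le> t * t' * R" "R \<le> t * t' * R"
    using \<open>t \<ge> 1\<close> \<open>t' \<ge> 1\<close> \<open>R > 1\<close> mult_mono[of 1 t 1 t']
    by (simp_all add: mult_le_cancel_right1)
  then have "t * R \<le> r" "t' * R \<le> r'" and r'_pos: "0 < r'" using r \<open>R > 1\<close> by linarith+
  then have "2 * t \<le> d * r" "2 * t' \<le> d * r'"
    using \<open>R > 1\<close> unfolding d_def by (simp_all add: field_simps)
  moreover have "0 < d" "25 * d < e^2"
    using e \<open>R > 50 / e^2\<close> \<open>R > 1\<close> unfolding d_def by (simp_all add: field_simps)
  moreover have "\<bar>heis_gauge p - r\<bar> \<le> 2 * t" "\<bar>heis_gauge q - r'\<bar> \<le> 2 * t'" "r - 2 * t \<le> hdist q p"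
    using hshell_dist_bound[OF shell(1)] hshell_dist_bound[OF shell(2)]
      hshell_dist_bound[OF shell(3)] r r'_pos
    by (auto simp: hdist_zero_left abs_le_iff)
  ultimately show ?thesis
    using hdist_le_hdist_hproj[OF p q] e r r'_pos hdist_nonneg[of "hproj p" "hproj q"]
    unfolding hdist_commute[of "hproj q"]
    by (intro hproj_dist_lower_bound[where a = "heis_gauge p" and b = "heis_gauge q"]) auto
qed

theorem lemma11:
  "\<forall>e::real. 0 < e \<and> e < 1 \<longrightarrow>
    (\<exists>Rbar>0. \<forall>(p::'n::finite heis) q t t' R r r'.
       p \<noteq> 0 \<longrightarrow> q \<noteq> 0 \<longrightarrow> t \<ge> 1 \<longrightarrow> t' \<ge> 1 \<longrightarrow> R > Rbar \<longrightarrow> R > 1 \<longrightarrow>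
       r \<ge> r' \<longrightarrow> r' \<ge> t * t' * R \<longrightarrow> r' \<ge> e * r \<longrightarrow>
       0 \<in> hshell p r t \<inter> hshell q r' t' \<longrightarrow> q \<in> hshell p r t \<longrightarrow>
       hdist (hproj p) (hproj q) \<ge> (1/2) * (1 - sqrt (1 - e^2 / 4)))"
  apply (intro allI impI)
  subgoal for e
    using hproj_separation[of e] by (intro exI[of _ "50 / e^2"]) auto
  done

end
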